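(* Let $E$ be a pseudo effect algebra satisfying (RDP), let $s_1,s_2\in\mathcal S(E)$, and let $F_1,F_2$ be the faces of $\mathcal S(E)$ generated by $s_1$ and $s_2$ respectively. The following are equivalent: (i) $F_1\cap F_2=\emptyset$; (ii) $s_1\wedge s_2=0$ in $\mathcal J(E)$; (iii) $s_1\vee s_2=s_1+s_2$ in $\mathcal J(E)$; (iv) for every $x\in E$ and every $\epsilon>0$ there exist $x_1,x_2\in E$ with $x=x_1+x_2$, $s_1(x)-s_1(x_1)<\epsilon$ and $s_2(x)-s_2(x_2)<\epsilon$. In particular, if $s_1,s_2$ are two distinct extremal states of $E$, then $s_1\wedge s_2=0$.
   Context: Pseudo effect algebra: partial algebra $(E;+,0,1)$ such that for all $a,b,c$: (i) $a+b$ and $(a+b)+c$ exist iff $b+c$ and $a+(b+c)$ exist, and then they are equal; (ii) there is exactly one $d$ and one $e$ with $a+d=e+a=1$; (iii) if $a+b$ exists there are $d,e$ with $a+b=d+a=b+e$; (iv) if $1+a$ or $a+1$ exists then $a=0$. (RDP): whenever $a_1+a_2=b_1+b_2$ there are $d_1,\dots,d_4$ with $d_1+d_2=a_1$, $d_3+d_4=a_2$, $d_1+d_3=b_1$, $d_2+d_4=b_2$. Signed measure: $m:E\to\mathbb R$ additive on defined sums; measure: nonnegative signed measure; state: measure with $s(1)=1$; $\mathcal S(E)$: set of states; extremal state: extreme point of the convex set $\mathcal S(E)$. $\mathcal J(E)$: signed measures that are differences of two measures, ordered by $m_1\le^+m_2$ iff $m_2-m_1$ is a measure; under (RDP) it is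 a lattice-ordered group, and $\wedge,\vee$ refer to this lattice. A face of a convex set $K$ is a convex $F\subseteq K$ such that $\lambda x_1+(1-\lambda)x_2\in F$, $x_1,x_2\in K$, $0<\lambda<1$ imply $x_1,x_2\in F$; the face generated by a point is the smallest face containing it. *)

theory Defs
  imports Complex_Main
begin

text \<open>A pseudo effect algebra on the whole type 'a: partial addition pls
  (None = undefined), constants z (zero) and u (unit).\<close>

definition pea :: "('a \<Rightarrow> 'a \<Rightarrow> 'a option) \<Rightarrow> 'a \<Rightarrow> 'a \<Rightarrow> bool" where
  "pea pls z u \<longleftrightarrow>
     (\<forall>a b c. Option.bind (pls a b) (\<lambda>ab. pls ab c) = Option.bind (pls b c) (\<lambda>bc. pls a bc)) \<and>
     (\<forall>a. (\<exists>!d. pls a d = Some u) \<and> (\<exists>!e. pls e a = Some u)) \<and>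
     (\<forall>a b ab. pls a b = Some ab \<longrightarrow> (\<exists>d e. pls d a = Some ab \<and> pls b e = Some ab)) \<and>
     (\<forall>a. (pls u a \<noteq> None \<or> pls a u \<noteq> None) \<longrightarrow> a = z)"

definition RDP :: "('a \<Rightarrow> 'a \<Rightarrow> 'a option) \<Rightarrow> bool" where
  "RDP pls \<longleftrightarrow>
     (\<forall>a1 a2 b1 b2 c. pls a1 a2 = Some c \<and> pls b1 b2 = Some c \<longrightarrow>
        (\<exists>d1 d2 d3 d4. pls d1 d2 = Some a1 \<and> pls d3 d4 = Some a2 \<and>
                       pls d1 d3 = Some b1 \<and> pls d2 d4 = Some b2))"

definition signed_measure :: "('a \<Rightarrow> 'a \<Rightarrow> 'a option) \<Rightarrow> ('a \<Rightarrow> real) \<Rightarrow> bool" where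
  "signed_measure pls m \<longleftrightarrow> (\<forall>a b c. pls a b = Some c \<longrightarrow> m c = m a + m b)"

definition is_measure :: "('a \<Rightarrow> 'a \<Rightarrow> 'a option) \<Rightarrow> ('a \<Rightarrow> real) \<Rightarrow> bool" where
  "is_measure pls m \<longleftrightarrow> signed_measure pls m \<and> (\<forall>a. 0 \<le> m a)"

definition is_state :: "('a \<Rightarrow> 'a \<Rightarrow> 'a option) \<Rightarrow> 'a \<Rightarrow> ('a \<Rightarrow> real) \<Rightarrow> bool" where
  "is_state pls u s \<longleftrightarrow> is_measure pls s \<and> s u = 1"

definition states :: "('a \<Rightarrow> 'a \<Rightarrow> 'a option) \<Rightarrow> 'a \<Rightarrow> ('a \<Rightarrow> real) set" where
  "states pls u = {s. is_state pls u s}"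

definition comb :: "real \<Rightarrow> ('a \<Rightarrow> real) \<Rightarrow> ('a \<Rightarrow> real) \<Rightarrow> ('a \<Rightarrow> real)" where
  "comb l f g = (\<lambda>x. l * f x + (1 - l) * g x)"

definition convex_fn :: "('a \<Rightarrow> real) set \<Rightarrow> bool" where
  "convex_fn K \<longleftrightarrow> (\<forall>f\<in>K. \<forall>g\<in>K. \<forall>l. 0 \<le> l \<and> l \<le> 1 \<longrightarrow> comb l f g \<in> K)"

definition is_face :: "('a \<Rightarrow> real) set \<Rightarrow> ('a \<Rightarrow> real) set \<Rightarrow> bool" where
  "is_face K F \<longleftrightarrow> F \<subseteq> K \<and> convex_fn F \<and>
     (\<forall>f\<in>K. \<forall>g\<in>K. \<forall>l. 0 < l \<and> l < 1 \<and> comb l f g \<in> F \<longrightarrow> f \<in> F \<and> g \<in> F)"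

definition face_gen :: "('a \<Rightarrow> real) set \<Rightarrow> ('a \<Rightarrow> real) \<Rightarrow> ('a \<Rightarrow> real) set" where
  "face_gen K s = \<Inter>{F. is_face K F \<and> s \<in> F}"

definition extreme_pt :: "('a \<Rightarrow> real) set \<Rightarrow> ('a \<Rightarrow> real) \<Rightarrow> bool" where
  "extreme_pt K s \<longleftrightarrow> s \<in> K \<and>
     (\<forall>f\<in>K. \<forall>g\<in>K. \<forall>l. 0 < l \<and> l < 1 \<and> s = comb l f g \<longrightarrow> f = s \<and> g = s)"

definition Jset :: "('a \<Rightarrow> 'a \<Rightarrow> 'a option) \<Rightarrow> ('a \<Rightarrow> real) set" where
  "Jset pls = {m. \<exists>m1 m2. is_measure pls m1 \<and> is_measure pls m2 \<and> m = (\<lambda>x. m1 x - m2 x)}"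

definition leJ :: "('a \<Rightarrow> 'a \<Rightarrow> 'a option) \<Rightarrow> ('a \<Rightarrow> real) \<Rightarrow> ('a \<Rightarrow> real) \<Rightarrow> bool" where
  "leJ pls m1 m2 \<longleftrightarrow> is_measure pls (\<lambda>x. m2 x - m1 x)"

definition is_meetJ :: "('a \<Rightarrow> 'a \<Rightarrow> 'a option) \<Rightarrow> ('a \<Rightarrow> real) \<Rightarrow> ('a \<Rightarrow> real) \<Rightarrow> ('a \<Rightarrow> real) \<Rightarrow> bool" where
  "is_meetJ pls m a b \<longleftrightarrow> m \<in> Jset pls \<and> leJ pls m a \<and> leJ pls m b \<and>
     (\<forall>k\<in>Jset pls. leJ pls k a \<and> leJ pls k b \<longrightarrow> leJ pls k m)"

definition is_joinJ :: "('a \<Rightarrow> 'a \<Rightarrow> 'a option) \<Rightarrow> ('a \<Rightarrow> real) \<Rightarrow> ('a \<Rightarrow> real) \<Rightarrow> ('a \<Rightarrow> real) \<Rightarrow> bool" where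
  "is_joinJ pls m a b \<longleftrightarrow> m \<in> Jset pls \<and> leJ pls a m \<and> leJ pls b m \<and>
     (\<forall>k\<in>Jset pls. leJ pls a k \<and> leJ pls b k \<longrightarrow> leJ pls m k)"

end

theory Submission
  imports Defs
begin

(*
  For measures mu, nu on a pseudo effect algebra with (RDP) the
  lattice meet in J(E) is computed explicitly by
      (mu /\ nu)(y) = inf { mu y1 + nu y2 | y1 + y2 = y }.
  Under (RDP) this infimum is additive, hence a measure, and it is the
  greatest lower bound of mu and nu even among all signed measures.
  All four conditions of the theorem are then reformulated as
  "mu /\ nu vanishes identically":
   - meet = 0 and join = mu + nu directly from the lattice properties;
   - the epsilon-decomposition condition is the statement that the infimum
     defining (mu /\ nu)(x) is 0;
   - the face of S(E) generated by a state s is the set of states dominated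
     by a multiple of s, so two generated faces meet iff some state is
     dominated by multiples of both s1 and s2, iff s1 /\ s2 is nonzero
     (normalise s1 /\ s2 to obtain such a state).
  A dominated state t lies in the face of an extremal state s, hence t = s;
  so distinct extremal states have disjoint faces and meet 0.
*)

lemma pea_assoc_left:
  assumes "pea pls z u" "pls a b = Some ab" "pls ab c = Some r"
  shows "\<exists>bc. pls b c = Some bc \<and> pls a bc = Some r"
proof -
  have "Option.bind (pls a b) (\<lambda>ab. pls ab c) = Option.bind (pls b c) (\<lambda>bc. pls a bc)"
    using assms(1) unfolding pea_def by blast
  with assms(2,3) show ?thesis by (cases "pls b c") auto
qed

lemma pea_assoc_right:
  assumes "pea pls z u" "pls b c = Some bc" "pls a bc = Some r"
  shows "\<exists>ab. pls a b = Some ab \<and> pls ab c = Some r"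
proof -
  have "Option.bind (pls a b) (\<lambda>ab. pls ab c) = Option.bind (pls b c) (\<lambda>bc. pls a bc)"
    using assms(1) unfolding pea_def by blast
  with assms(2,3) show ?thesis by (cases "pls a b") auto
qed

lemma pea_unit_zero:
  assumes "pea pls z u"
  shows "pls u z = Some u" "pls z u = Some u"
proof -
  from assms obtain d where d: "pls u d = Some u" unfolding pea_def by blast
  with assms have "d = z" unfolding pea_def by blast
  with d show "pls u z = Some u" by simp
  from assms obtain e where e: "pls e u = Some u" unfolding pea_def by blast
  with assms have "e = z" unfolding pea_def by blast
  with e show "pls z u = Some u" by simp
qed

lemma pea_zero_right:
  assumes "pea pls z u"
  shows "pls y z = Some y"
proof -
  from assms obtain e where e: "pls e y = Some u" unfolding pea_def by blast
  from pea_assoc_left[OF assms e pea_unit_zero(1)[OF assms]] obtain w where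
    w: "pls y z = Some w" "pls e w = Some u" by blast
  from assms have "\<exists>!d. pls e d = Some u" unfolding pea_def by blast
  with e w have "w = y" by blast
  with w show ?thesis by simp
qed

lemma pea_zero_left:
  assumes "pea pls z u"
  shows "pls z y = Some y"
proof -
  from assms obtain d where d: "pls y d = Some u" unfolding pea_def by blast
  from pea_assoc_right[OF assms d pea_unit_zero(2)[OF assms]] obtain w where
    w: "pls z y = Some w" "pls w d = Some u" by blast
  from assms have "\<exists>!e. pls e d = Some u" unfolding pea_def by blast
  with d w have "w = y" by blast
  with w show ?thesis by simp
qed

text \<open>Rearranging (a1 + a2) + (b1 + b2): by axiom (iii) the summand a2 can be moved
  past b1 at the price of replacing a1 by some d with d + a2 = a2 + b1.  This
  substitutes for the missing commutativity in the subadditivity of the meet.\<close>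

lemma pea_rearrange:
  assumes "pea pls z u" "pls a1 a2 = Some a" "pls b1 b2 = Some b" "pls a b = Some ab"
  shows "\<exists>c1 d q p. pls a1 d = Some c1 \<and> pls c1 q = Some ab \<and> pls a2 b2 = Some q
     \<and> pls a2 b1 = Some p \<and> pls d a2 = Some p"
proof -
  from pea_assoc_left[OF assms(1,2,4)] obtain v where
    v: "pls a2 b = Some v" "pls a1 v = Some ab" by blast
  from pea_assoc_right[OF assms(1,3) v(1)] obtain p where
    p: "pls a2 b1 = Some p" "pls p b2 = Some v" by blast
  from assms(1) p(1) obtain d where d: "pls d a2 = Some p" unfolding pea_def by blast
  from pea_assoc_left[OF assms(1) d p(2)] obtain q where
    q: "pls a2 b2 = Some q" "pls d q = Some v" by blast
  from pea_assoc_right[OF assms(1) q(2) v(2)] obtain c1 where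
    "pls a1 d = Some c1" "pls c1 q = Some ab" by blast
  with q p d show ?thesis by blast
qed

lemma signed_measure_add: "signed_measure pls m \<Longrightarrow> pls a b = Some c \<Longrightarrow> m c = m a + m b"
  unfolding signed_measure_def by blast

lemma measure_signed: "is_measure pls m \<Longrightarrow> signed_measure pls m"
  unfolding is_measure_def by blast

lemma measure_add: "is_measure pls m \<Longrightarrow> pls a b = Some c \<Longrightarrow> m c = m a + m b"
  unfolding is_measure_def signed_measure_def by blast

lemma measure_nonneg: "is_measure pls m \<Longrightarrow> 0 \<le> m a"
  unfolding is_measure_def by blast

lemma signed_measure_zero: "pea pls z u \<Longrightarrow> signed_measure pls m \<Longrightarrow> m z = 0"
  using signed_measure_add[of pls m u z u] pea_unit_zero[of pls z u] by simp

lemma measure_le_unit: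
  assumes "pea pls z u" "is_measure pls m"
  shows "m y \<le> m u"
proof -
  from assms obtain d where d: "pls y d = Some u" unfolding pea_def by blast
  show ?thesis using measure_add[OF assms(2) d] measure_nonneg[OF assms(2), of d] by simp
qed

lemma signed_measure_diff:
  "signed_measure pls f \<Longrightarrow> signed_measure pls g \<Longrightarrow> signed_measure pls (\<lambda>x. f x - g x)"
  unfolding signed_measure_def by auto

lemma measure_lincomb:
  assumes "is_measure pls f" "is_measure pls g" "0 \<le> a" "0 \<le> b"
    "\<And>x. h x = a * f x + b * g x"
  shows "is_measure pls h"
  using assms unfolding is_measure_def signed_measure_def
  by (auto simp: algebra_simps)

lemma zero_measure: "is_measure pls (\<lambda>x. 0)"
  unfolding is_measure_def signed_measure_def by simp

lemma JsetI: "is_measure pls f \<Longrightarrow> is_measure pls g \<Longrightarrow> h = (\<lambda>x. f x - g x) \<Longrightarrow> h \<in> Jset pls"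
  unfolding Jset_def by blast

lemma Jset_signed: "k \<in> Jset pls \<Longrightarrow> signed_measure pls k"
  unfolding Jset_def is_measure_def signed_measure_def by auto

lemma leJ_pointwise: "leJ pls k m \<Longrightarrow> k x \<le> m x"
  unfolding leJ_def is_measure_def by (metis diff_ge_0_iff_ge)

lemma leJI:
  "signed_measure pls k \<Longrightarrow> signed_measure pls m \<Longrightarrow> (\<And>x. k x \<le> m x) \<Longrightarrow> leJ pls k m"
  unfolding leJ_def is_measure_def using signed_measure_diff by fastforce

definition meas_meet :: "('a \<Rightarrow> 'a \<Rightarrow> 'a option) \<Rightarrow> ('a \<Rightarrow> real) \<Rightarrow> ('a \<Rightarrow> real) \<Rightarrow> 'a \<Rightarrow> real" where
  "meas_meet pls \<mu> \<nu> y = Inf {\<mu> y1 + \<nu> y2 | y1 y2. pls y1 y2 = Some y}"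

lemma meas_meet_lower:
  assumes "is_measure pls \<mu>" "is_measure pls \<nu>" "pls y1 y2 = Some y"
  shows "meas_meet pls \<mu> \<nu> y \<le> \<mu> y1 + \<nu> y2"
  unfolding meas_meet_def
proof (rule cInf_lower)
  show "\<mu> y1 + \<nu> y2 \<in> {\<mu> y1 + \<nu> y2 | y1 y2. pls y1 y2 = Some y}" using assms(3) by blast
  show "bdd_below {\<mu> y1 + \<nu> y2 | y1 y2. pls y1 y2 = Some y}"
    by (rule bdd_belowI[of _ 0])
      (use measure_nonneg[OF assms(1)] measure_nonneg[OF assms(2)] in fastforce)
qed

lemma meas_meet_greatest:
  assumes "pea pls z u" "\<And>y1 y2. pls y1 y2 = Some y \<Longrightarrow> c \<le> \<mu> y1 + \<nu> y2"
  shows "c \<le> meas_meet pls \<mu> \<nu> y"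
  unfolding meas_meet_def
proof (rule cInf_greatest)
  show "{\<mu> y1 + \<nu> y2 | y1 y2. pls y1 y2 = Some y} \<noteq> {}"
    using pea_zero_left[OF assms(1)] by blast
qed (use assms(2) in blast)

text \<open>Additivity of the meet is where (RDP) enters: superadditivity refines a
  decomposition of a + b along a and b, subadditivity glues decompositions of a
  and of b together by rearrangement.\<close>

lemma meas_meet_add:
  assumes pea: "pea pls z u" and rdp: "RDP pls"
    and \<mu>: "is_measure pls \<mu>" and \<nu>: "is_measure pls \<nu>" and ab: "pls a b = Some ab"
  shows "meas_meet pls \<mu> \<nu> ab = meas_meet pls \<mu> \<nu> a + meas_meet pls \<mu> \<nu> b"
proof (rule antisym)
  show "meas_meet pls \<mu> \<nu> a + meas_meet pls \<mu> \<nu> b \<le> meas_meet pls \<mu> \<nu> ab"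
  proof (rule meas_meet_greatest[OF pea])
    fix c1 c2 assume c: "pls c1 c2 = Some ab"
    from rdp ab c obtain d1 d2 d3 d4 where d: "pls d1 d2 = Some a" "pls d3 d4 = Some b"
      "pls d1 d3 = Some c1" "pls d2 d4 = Some c2" unfolding RDP_def by blast
    have "meas_meet pls \<mu> \<nu> a \<le> \<mu> d1 + \<nu> d2" by (rule meas_meet_lower[OF \<mu> \<nu> d(1)])
    moreover have "meas_meet pls \<mu> \<nu> b \<le> \<mu> d3 + \<nu> d4" by (rule meas_meet_lower[OF \<mu> \<nu> d(2)])
    moreover have "\<mu> c1 = \<mu> d1 + \<mu> d3" by (rule measure_add[OF \<mu> d(3)])
    moreover have "\<nu> c2 = \<nu> d2 + \<nu> d4" by (rule measure_add[OF \<nu> d(4)])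
    ultimately show "meas_meet pls \<mu> \<nu> a + meas_meet pls \<mu> \<nu> b \<le> \<mu> c1 + \<nu> c2" by linarith
  qed
next
  have glue: "meas_meet pls \<mu> \<nu> ab \<le> (\<mu> a1 + \<nu> a2) + (\<mu> b1 + \<nu> b2)"
    if a: "pls a1 a2 = Some a" and b: "pls b1 b2 = Some b" for a1 a2 b1 b2
  proof -
    from pea_rearrange[OF pea a b ab] obtain c1 d q p where s: "pls a1 d = Some c1"
      "pls c1 q = Some ab" "pls a2 b2 = Some q" "pls a2 b1 = Some p" "pls d a2 = Some p"
      by blast
    have "meas_meet pls \<mu> \<nu> ab \<le> \<mu> c1 + \<nu> q" by (rule meas_meet_lower[OF \<mu> \<nu> s(2)])
    moreover have "\<mu> c1 = \<mu> a1 + \<mu> d" by (rule measure_add[OF \<mu> s(1)])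
    moreover have "\<nu> q = \<nu> a2 + \<nu> b2" by (rule measure_add[OF \<nu> s(3)])
    moreover have "\<mu> p = \<mu> a2 + \<mu> b1" by (rule measure_add[OF \<mu> s(4)])
    moreover have "\<mu> p = \<mu> d + \<mu> a2" by (rule measure_add[OF \<mu> s(5)])
    ultimately show ?thesis by linarith
  qed
  have "meas_meet pls \<mu> \<nu> ab - (\<mu> b1 + \<nu> b2) \<le> meas_meet pls \<mu> \<nu> a"
    if b: "pls b1 b2 = Some b" for b1 b2
    by (rule meas_meet_greatest[OF pea]) (use glue[OF _ b] in force)
  then have "meas_meet pls \<mu> \<nu> ab - meas_meet pls \<mu> \<nu> a \<le> meas_meet pls \<mu> \<nu> b"
    by (intro meas_meet_greatest[OF pea]) force
  then show "meas_meet pls \<mu> \<nu> ab \<le> meas_meet pls \<mu> \<nu> a + meas_meet pls \<mu> \<nu> b" by linarith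
qed

lemma meas_meet_measure:
  assumes "pea pls z u" "RDP pls" "is_measure pls \<mu>" "is_measure pls \<nu>"
  shows "is_measure pls (meas_meet pls \<mu> \<nu>)"
proof -
  have "0 \<le> meas_meet pls \<mu> \<nu> y" for y
    by (rule meas_meet_greatest[OF assms(1)])
      (use measure_nonneg[OF assms(3)] measure_nonneg[OF assms(4)] in fastforce)
  then show ?thesis
    unfolding is_measure_def signed_measure_def using meas_meet_add[OF assms] by blast
qed

text \<open>The meet is a lower bound of both measures (decompose y as y + 0 and 0 + y) \<dots>\<close>

lemma meas_meet_below:
  assumes "pea pls z u" "RDP pls" "is_measure pls \<mu>" "is_measure pls \<nu>"
  shows "leJ pls (meas_meet pls \<mu> \<nu>) \<mu>" "leJ pls (meas_meet pls \<mu> \<nu>) \<nu>"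
proof -
  have m: "signed_measure pls (meas_meet pls \<mu> \<nu>)"
    using meas_meet_measure[OF assms] by (rule measure_signed)
  have z: "\<mu> z = 0" "\<nu> z = 0"
    using signed_measure_zero[OF assms(1)] measure_signed assms(3,4) by blast+
  have "meas_meet pls \<mu> \<nu> y \<le> \<mu> y" for y
    using meas_meet_lower[OF assms(3,4) pea_zero_right[OF assms(1)]] z by simp
  then show "leJ pls (meas_meet pls \<mu> \<nu>) \<mu>"
    using leJI[OF m measure_signed[OF assms(3)]] by blast
  have "meas_meet pls \<mu> \<nu> y \<le> \<nu> y" for y
    using meas_meet_lower[OF assms(3,4) pea_zero_left[OF assms(1)]] z by simp
  then show "leJ pls (meas_meet pls \<mu> \<nu>) \<nu>"
    using leJI[OF m measure_signed[OF assms(4)]] by blast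
qed

lemma meas_meet_greatest_lower:
  assumes "pea pls z u" "signed_measure pls k" "leJ pls k \<mu>" "leJ pls k \<nu>"
  shows "k y \<le> meas_meet pls \<mu> \<nu> y"
proof (rule meas_meet_greatest[OF assms(1)])
  fix y1 y2 assume "pls y1 y2 = Some y"
  then have "k y = k y1 + k y2" using signed_measure_add[OF assms(2)] by blast
  then show "k y \<le> \<mu> y1 + \<nu> y2"
    using leJ_pointwise[OF assms(3), of y1] leJ_pointwise[OF assms(4), of y2] by linarith
qed

text \<open>Being the greatest lower bound, the meet does not depend on the order of its
  arguments, although its defining infimum does.\<close>

lemma meas_meet_commute:
  assumes "pea pls z u" "RDP pls" "is_measure pls \<mu>" "is_measure pls \<nu>"
  shows "meas_meet pls \<mu> \<nu> = meas_meet pls \<nu> \<mu>"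
proof -
  have le: "meas_meet pls \<alpha> \<beta> y \<le> meas_meet pls \<beta> \<alpha> y"
    if "is_measure pls \<alpha>" "is_measure pls \<beta>" for \<alpha> \<beta> y
  proof (rule meas_meet_greatest_lower[OF assms(1)])
    show "signed_measure pls (meas_meet pls \<alpha> \<beta>)"
      using meas_meet_measure[OF assms(1,2) that] by (rule measure_signed)
    show "leJ pls (meas_meet pls \<alpha> \<beta>) \<beta>" "leJ pls (meas_meet pls \<alpha> \<beta>) \<alpha>"
      using meas_meet_below[OF assms(1,2) that] by auto
  qed
  show ?thesis using le[OF assms(3,4)] le[OF assms(4,3)] by (intro ext antisym)
qed

lemma meetJ_zero_iff:
  assumes pea: "pea pls z u" and "RDP pls"
    and \<mu>: "is_measure pls \<mu>" and \<nu>: "is_measure pls \<nu>"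
  shows "is_meetJ pls (\<lambda>x. 0) \<mu> \<nu> \<longleftrightarrow> (\<forall>y. meas_meet pls \<mu> \<nu> y = 0)"
    (is "_ \<longleftrightarrow> (\<forall>y. ?m y = 0)")
proof
  assume "is_meetJ pls (\<lambda>x. 0) \<mu> \<nu>"
  moreover have "?m \<in> Jset pls" by (rule JsetI[OF meas_meet_measure[OF assms] zero_measure]) simp
  ultimately have "leJ pls ?m (\<lambda>x. 0)"
    using meas_meet_below[OF assms] unfolding is_meetJ_def by blast
  then have "?m y \<le> 0" for y using leJ_pointwise[of pls ?m "\<lambda>x. 0"] by simp
  then show "\<forall>y. ?m y = 0"
    using measure_nonneg[OF meas_meet_measure[OF assms]] by (simp add: order_antisym)
next
  assume zero: "\<forall>y. ?m y = 0"
  have "leJ pls k (\<lambda>x. 0)" if k: "k \<in> Jset pls" "leJ pls k \<mu>" "leJ pls k \<nu>" for k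
    using leJI[OF Jset_signed[OF k(1)] measure_signed[OF zero_measure]]
      meas_meet_greatest_lower[OF pea Jset_signed[OF k(1)] k(2,3)] zero by simp
  moreover have "(\<lambda>x. 0::real) \<in> Jset pls" by (rule JsetI[OF zero_measure zero_measure]) simp
  ultimately show "is_meetJ pls (\<lambda>x. 0) \<mu> \<nu>"
    unfolding is_meetJ_def leJ_def using \<mu> \<nu> by simp
qed

text \<open>Condition (iii): the join in J(E) is the sum exactly when the meet vanishes,
  reflecting the lattice-group identity (mu \/ nu) + (mu /\ nu) = mu + nu.\<close>

lemma joinJ_sum_iff:
  assumes pea: "pea pls z u" and "RDP pls"
    and \<mu>: "is_measure pls \<mu>" and \<nu>: "is_measure pls \<nu>"
  shows "is_joinJ pls (\<lambda>x. \<mu> x + \<nu> x) \<mu> \<nu> \<longleftrightarrow> (\<forall>y. meas_meet pls \<mu> \<nu> y = 0)"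
    (is "_ \<longleftrightarrow> (\<forall>y. ?m y = 0)")
proof -
  have m: "is_measure pls ?m" by (rule meas_meet_measure[OF assms])
  have sum: "is_measure pls (\<lambda>x. \<mu> x + \<nu> x)" by (rule measure_lincomb[OF \<mu> \<nu>, of 1 1]) auto
  show ?thesis
  proof
    assume join: "is_joinJ pls (\<lambda>x. \<mu> x + \<nu> x) \<mu> \<nu>"
    let ?j = "\<lambda>x. \<mu> x + \<nu> x - ?m x"
    have "?j \<in> Jset pls" by (rule JsetI[OF sum m]) simp
    moreover have "leJ pls \<mu> ?j" "leJ pls \<nu> ?j"
      using meas_meet_below[OF assms] unfolding leJ_def by (simp_all add: algebra_simps)
    ultimately have "leJ pls (\<lambda>x. \<mu> x + \<nu> x) ?j" using join unfolding is_joinJ_def by blast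
    then have "?m y \<le> 0" for y using leJ_pointwise[of pls "\<lambda>x. \<mu> x + \<nu> x" ?j y] by simp
    then show "\<forall>y. ?m y = 0" using measure_nonneg[OF m] by (simp add: order_antisym)
  next
    assume zero: "\<forall>y. ?m y = 0"
    have "leJ pls (\<lambda>x. \<mu> x + \<nu> x) k" if k: "k \<in> Jset pls" "leJ pls \<mu> k" "leJ pls \<nu> k" for k
    proof (rule leJI[OF measure_signed[OF sum] Jset_signed[OF k(1)]])
      let ?k' = "\<lambda>x. \<mu> x + \<nu> x - k x"
      have "signed_measure pls ?k'"
        by (rule signed_measure_diff[OF measure_signed[OF sum] Jset_signed[OF k(1)]])
      moreover have "leJ pls ?k' \<mu>" "leJ pls ?k' \<nu>"
        using k(2,3) unfolding leJ_def by (simp_all add: algebra_simps)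
      ultimately have "\<mu> x + \<nu> x - k x \<le> ?m x" for x by (rule meas_meet_greatest_lower[OF pea])
      then show "\<mu> x + \<nu> x \<le> k x" for x using zero by (simp add: algebra_simps)
    qed
    moreover have "leJ pls \<mu> (\<lambda>x. \<mu> x + \<nu> x)" "leJ pls \<nu> (\<lambda>x. \<mu> x + \<nu> x)"
      using \<mu> \<nu> unfolding leJ_def by simp_all
    moreover have "(\<lambda>x. \<mu> x + \<nu> x) \<in> Jset pls" by (rule JsetI[OF sum zero_measure]) simp
    ultimately show "is_joinJ pls (\<lambda>x. \<mu> x + \<nu> x) \<mu> \<nu>" unfolding is_joinJ_def by blast
  qed
qed

text \<open>Condition (iv): since mu x - mu x1 = mu x2 and nu x - nu x2 = nu x1 for
  x = x1 + x2, approximate splittings say precisely that the infimum defining the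
  meet of nu and mu is 0.\<close>

lemma approx_splitting_iff:
  assumes pea: "pea pls z u" and \<mu>: "is_measure pls \<mu>" and \<nu>: "is_measure pls \<nu>"
  shows "(\<forall>x. \<forall>\<epsilon>>0. \<exists>x1 x2. pls x1 x2 = Some x \<and> \<mu> x - \<mu> x1 < \<epsilon> \<and> \<nu> x - \<nu> x2 < \<epsilon>)
     \<longleftrightarrow> (\<forall>y. meas_meet pls \<nu> \<mu> y = 0)"
    (is "?split \<longleftrightarrow> (\<forall>y. ?m y = 0)")
proof
  have m_nonneg: "0 \<le> ?m y" for y
    by (rule meas_meet_greatest[OF pea]) (use measure_nonneg[OF \<mu>] measure_nonneg[OF \<nu>] in fastforce)
  assume split: ?split
  have "\<not> 0 < ?m y" for y
  proof
    assume "0 < ?m y"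
    then have "0 < ?m y / 2" by simp
    with split obtain x1 x2 where x: "pls x1 x2 = Some y"
      "\<mu> y - \<mu> x1 < ?m y / 2" "\<nu> y - \<nu> x2 < ?m y / 2"
      by blast
    have "?m y \<le> \<nu> x1 + \<mu> x2" by (rule meas_meet_lower[OF \<nu> \<mu> x(1)])
    then show False using x measure_add[OF \<mu> x(1)] measure_add[OF \<nu> x(1)] by linarith
  qed
  then show "\<forall>y. ?m y = 0" using m_nonneg by (simp add: not_less order_antisym)
next
  assume zero: "\<forall>y. ?m y = 0"
  show ?split
  proof (intro allI impI)
    fix x and \<epsilon> :: real assume "\<epsilon> > 0"
    then have lt: "Inf {\<nu> y1 + \<mu> y2 | y1 y2. pls y1 y2 = Some x} < \<epsilon>"
      using zero[rule_format, of x] unfolding meas_meet_def by simp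
    have ne: "{\<nu> y1 + \<mu> y2 | y1 y2. pls y1 y2 = Some x} \<noteq> {}"
      using pea_zero_left[OF pea] by blast
    obtain w where "w \<in> {\<nu> y1 + \<mu> y2 | y1 y2. pls y1 y2 = Some x}" "w < \<epsilon>"
      using cInf_lessD[OF ne lt] by blast
    then obtain x1 x2 where x: "pls x1 x2 = Some x" "\<nu> x1 + \<mu> x2 < \<epsilon>" by blast
    have "\<mu> x - \<mu> x1 < \<epsilon>" "\<nu> x - \<nu> x2 < \<epsilon>"
      using x(2) measure_add[OF \<mu> x(1)] measure_add[OF \<nu> x(1)]
        measure_nonneg[OF \<mu>, of x2] measure_nonneg[OF \<nu>, of x1] by linarith+
    with x(1) show "\<exists>x1 x2. pls x1 x2 = Some x \<and> \<mu> x - \<mu> x1 < \<epsilon> \<and> \<nu> x - \<nu> x2 < \<epsilon>"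
      by blast
  qed
qed

lemma leJ_scale_mono:
  assumes "is_measure pls s" "leJ pls t (\<lambda>x. c * s x)" "c \<le> d"
  shows "leJ pls t (\<lambda>x. d * s x)"
  unfolding leJ_def
proof (rule measure_lincomb[of pls "\<lambda>x. c * s x - t x" s 1 "d - c"])
  show "is_measure pls (\<lambda>x. c * s x - t x)" using assms(2) unfolding leJ_def .
qed (use assms in \<open>auto simp: algebra_simps\<close>)

lemma leJ_scale:
  assumes "leJ pls f g" "0 \<le> a"
  shows "leJ pls (\<lambda>x. a * f x) (\<lambda>x. a * g x)"
  unfolding leJ_def
proof (rule measure_lincomb[of pls "\<lambda>x. g x - f x" "\<lambda>x. g x - f x" a 0])
  show "is_measure pls (\<lambda>x. g x - f x)" using assms(1) unfolding leJ_def .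
qed (use assms in \<open>auto simp: leJ_def algebra_simps\<close>)

lemma leJ_comb:
  assumes "leJ pls f1 g1" "leJ pls f2 g2" "0 \<le> l" "l \<le> 1"
  shows "leJ pls (comb l f1 f2) (comb l g1 g2)"
  unfolding leJ_def
proof (rule measure_lincomb[of pls "\<lambda>x. g1 x - f1 x" "\<lambda>x. g2 x - f2 x" l "1 - l"])
  show "is_measure pls (\<lambda>x. g1 x - f1 x)" "is_measure pls (\<lambda>x. g2 x - f2 x)"
    using assms(1,2) unfolding leJ_def by auto
qed (use assms in \<open>auto simp: comb_def algebra_simps\<close>)

lemma leJ_comb_part:
  assumes "leJ pls (comb l f g) h" "is_measure pls g" "0 < l" "l \<le> 1"
  shows "leJ pls f (\<lambda>x. h x / l)"
  unfolding leJ_def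
proof (rule measure_lincomb[of pls "\<lambda>x. h x - comb l f g x" g "1 / l" "(1 - l) / l"])
  show "is_measure pls (\<lambda>x. h x - comb l f g x)" using assms(1) unfolding leJ_def .
  show "h x / l - f x = 1 / l * (h x - comb l f g x) + (1 - l) / l * g x" for x
    using assms(3) by (simp add: comb_def field_simps)
qed (use assms in auto)

lemma comb_swap: "comb l f g = comb (1 - l) g f"
  unfolding comb_def by (simp add: algebra_simps)

lemma comb_same: "comb l f f = f"
  unfolding comb_def by (simp add: algebra_simps)

lemma stateD: "s \<in> states pls u \<Longrightarrow> is_measure pls s \<and> s u = 1"
  unfolding states_def is_state_def by simp

lemma states_convex:
  assumes "f \<in> states pls u" "g \<in> states pls u" "0 \<le> l" "l \<le> 1"
  shows "comb l f g \<in> states pls u"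
proof -
  have f: "is_measure pls f" "f u = 1" and g: "is_measure pls g" "g u = 1"
    using stateD[OF assms(1)] stateD[OF assms(2)] by auto
  have "is_measure pls (comb l f g)"
    by (rule measure_lincomb[OF f(1) g(1), of l "1 - l"]) (use assms(3,4) in \<open>auto simp: comb_def\<close>)
  moreover have "comb l f g u = 1" using f(2) g(2) by (simp add: comb_def)
  ultimately show ?thesis unfolding states_def is_state_def by simp
qed

text \<open>The states dominated by a positive multiple of s; this is the face generated by s.\<close>

definition dominated_states :: "('a \<Rightarrow> 'a \<Rightarrow> 'a option) \<Rightarrow> 'a \<Rightarrow> ('a \<Rightarrow> real) \<Rightarrow> ('a \<Rightarrow> real) set" where
  "dominated_states pls u s = {t \<in> states pls u. \<exists>c>0. leJ pls t (\<lambda>x. c * s x)}"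

lemma dominated_states_face:
  assumes s: "s \<in> states pls u"
  shows "is_face (states pls u) (dominated_states pls u s)"
proof -
  have sm: "is_measure pls s" using stateD[OF s] by simp
  have convex: "comb l f g \<in> dominated_states pls u s"
    if f: "f \<in> dominated_states pls u s" and g: "g \<in> dominated_states pls u s"
      and l: "0 \<le> l" "l \<le> 1" for f g l
  proof -
    from f g obtain c1 c2 where c: "c1 > 0" "leJ pls f (\<lambda>x. c1 * s x)"
      "c2 > 0" "leJ pls g (\<lambda>x. c2 * s x)" unfolding dominated_states_def by blast
    have "leJ pls f (\<lambda>x. (c1 + c2) * s x)" by (rule leJ_scale_mono[OF sm c(2)]) (use c in simp)
    moreover have "leJ pls g (\<lambda>x. (c1 + c2) * s x)" by (rule leJ_scale_mono[OF sm c(4)]) (use c in simp)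
    ultimately have "leJ pls (comb l f g) (comb l (\<lambda>x. (c1 + c2) * s x) (\<lambda>x. (c1 + c2) * s x))"
      by (rule leJ_comb[OF _ _ l])
    then have "leJ pls (comb l f g) (\<lambda>x. (c1 + c2) * s x)" by (simp only: comb_same)
    moreover have "comb l f g \<in> states pls u"
    proof (rule states_convex[OF _ _ l])
      show "f \<in> states pls u" "g \<in> states pls u" using f g unfolding dominated_states_def by auto
    qed
    moreover have "c1 + c2 > 0" using c by simp
    ultimately show ?thesis unfolding dominated_states_def by blast
  qed
  have part: "f \<in> dominated_states pls u s"
    if f: "f \<in> states pls u" and g: "g \<in> states pls u" and l: "0 < l" "l < 1"
      and h: "comb l f g \<in> dominated_states pls u s" for f g l
  proof -
    from h obtain c where c: "c > 0" "leJ pls (comb l f g) (\<lambda>x. c * s x)"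
      unfolding dominated_states_def by blast
    have "leJ pls f (\<lambda>x. c * s x / l)"
      by (rule leJ_comb_part[OF c(2)]) (use stateD[OF g] l in auto)
    then have "leJ pls f (\<lambda>x. c / l * s x)" by simp
    moreover have "c / l > 0" using c l by simp
    ultimately show ?thesis using f unfolding dominated_states_def by blast
  qed
  have extreme: "f \<in> dominated_states pls u s \<and> g \<in> dominated_states pls u s"
    if f: "f \<in> states pls u" and g: "g \<in> states pls u" and l: "0 < l" "l < 1"
      and h: "comb l f g \<in> dominated_states pls u s" for f g l
    using part[OF f g l h] part[OF g f, of "1 - l"] h l comb_swap[of l f g] by simp
  have "dominated_states pls u s \<subseteq> states pls u"
    unfolding dominated_states_def by blast
  then show ?thesis
    unfolding is_face_def convex_fn_def using convex extreme by blast
qed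

lemma state_decomp:
  assumes s: "s \<in> states pls u" and t: "t \<in> states pls u" and c: "c > 1"
    and le: "leJ pls t (\<lambda>x. c * s x)"
  shows "\<exists>r\<in>states pls u. s = comb (1 / c) t r"
proof -
  define r where "r = (\<lambda>x. (c * s x - t x) / (c - 1))"
  have m: "is_measure pls (\<lambda>x. c * s x - t x)" using le unfolding leJ_def .
  have "is_measure pls r"
    by (rule measure_lincomb[OF m m, of "1 / (c - 1)" 0]) (use c in \<open>auto simp: r_def\<close>)
  moreover have "r u = 1" using stateD[OF s] stateD[OF t] c by (simp add: r_def)
  ultimately have "r \<in> states pls u" unfolding states_def is_state_def by simp
  moreover have "s = comb (1 / c) t r" unfolding comb_def r_def using c by (auto simp: field_simps)
  ultimately show ?thesis by blast
qed

lemma dominated_state_decomp: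
  assumes s: "s \<in> states pls u" and t: "t \<in> dominated_states pls u s"
  shows "\<exists>r\<in>states pls u. \<exists>l. 0 < l \<and> l < 1 \<and> s = comb l t r"
proof -
  from t obtain c where ts: "t \<in> states pls u" and c: "c > 0" "leJ pls t (\<lambda>x. c * s x)"
    unfolding dominated_states_def by blast
  have "leJ pls t (\<lambda>x. (c + 1) * s x)" by (rule leJ_scale_mono[OF _ c(2)]) (use stateD[OF s] in auto)
  from state_decomp[OF s ts _ this] c obtain r where "r \<in> states pls u" "s = comb (1 / (c + 1)) t r"
    by auto
  moreover have "0 < 1 / (c + 1)" "1 / (c + 1) < 1" using c by auto
  ultimately show ?thesis by blast
qed

lemma face_gen_eq_dominated:
  assumes s: "s \<in> states pls u"
  shows "face_gen (states pls u) s = dominated_states pls u s"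
proof
  have "leJ pls s (\<lambda>x. 1 * s x)" unfolding leJ_def by (simp add: zero_measure)
  then have "\<exists>c>0. leJ pls s (\<lambda>x. c * s x)" by (intro exI[of _ "1::real"] conjI) simp_all
  then have "s \<in> dominated_states pls u s" using s unfolding dominated_states_def by blast
  then show "face_gen (states pls u) s \<subseteq> dominated_states pls u s"
    unfolding face_gen_def using dominated_states_face[OF s] by blast
next
  have "t \<in> F" if t: "t \<in> dominated_states pls u s" and F: "is_face (states pls u) F" "s \<in> F" for t F
  proof -
    from dominated_state_decomp[OF s t] obtain r l where
      "r \<in> states pls u" "0 < l" "l < 1" "s = comb l t r" by blast
    moreover have "t \<in> states pls u" using t unfolding dominated_states_def by blast
    moreover have "comb l t r \<in> F" using F(2) calculation(4) by simp
    ultimately show ?thesis using F(1) unfolding is_face_def by blast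
  qed
  then show "dominated_states pls u s \<subseteq> face_gen (states pls u) s"
    unfolding face_gen_def by blast
qed

lemma extreme_dominated:
  assumes "extreme_pt (states pls u) s" "t \<in> dominated_states pls u s"
  shows "t = s"
proof -
  have s: "s \<in> states pls u" using assms(1) unfolding extreme_pt_def by blast
  from dominated_state_decomp[OF s assms(2)] obtain r l where
    "r \<in> states pls u" "0 < l" "l < 1" "s = comb l t r" by blast
  moreover have "t \<in> states pls u" using assms(2) unfolding dominated_states_def by blast
  ultimately show ?thesis using assms(1) unfolding extreme_pt_def by blast
qed

text \<open>Two states dominate a common state iff their meet is nonzero: a common state
  t \<le> c s1, c s2 gives t / c \<le> s1 /\ s2, and conversely the normalised meet is
  such a state.\<close>

lemma common_dominated_iff:
  assumes pea: "pea pls z u" and rdp: "RDP pls"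
    and s1: "s1 \<in> states pls u" and s2: "s2 \<in> states pls u"
  shows "dominated_states pls u s1 \<inter> dominated_states pls u s2 \<noteq> {}
     \<longleftrightarrow> \<not> (\<forall>y. meas_meet pls s1 s2 y = 0)"
    (is "_ \<longleftrightarrow> \<not> (\<forall>y. ?m y = 0)")
proof -
  have \<mu>: "is_measure pls s1" and \<nu>: "is_measure pls s2" using stateD[OF s1] stateD[OF s2] by auto
  have m: "is_measure pls ?m" by (rule meas_meet_measure[OF pea rdp \<mu> \<nu>])
  show ?thesis
  proof
    assume "dominated_states pls u s1 \<inter> dominated_states pls u s2 \<noteq> {}"
    then obtain t c1 c2 where t: "t \<in> states pls u" and c: "c1 > 0" "c2 > 0"
      "leJ pls t (\<lambda>x. c1 * s1 x)" "leJ pls t (\<lambda>x. c2 * s2 x)"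
      unfolding dominated_states_def by blast
    define d where "d = c1 + c2"
    have d: "d > 0" using c by (simp add: d_def)
    have "leJ pls t (\<lambda>x. d * s1 x)" by (rule leJ_scale_mono[OF \<mu> c(3)]) (use c in \<open>simp add: d_def\<close>)
    then have "leJ pls (\<lambda>x. (1 / d) * t x) (\<lambda>x. (1 / d) * (d * s1 x))" by (rule leJ_scale) (use d in simp)
    then have le1: "leJ pls (\<lambda>x. (1 / d) * t x) s1" using d by simp
    have "leJ pls t (\<lambda>x. d * s2 x)" by (rule leJ_scale_mono[OF \<nu> c(4)]) (use c in \<open>simp add: d_def\<close>)
    then have "leJ pls (\<lambda>x. (1 / d) * t x) (\<lambda>x. (1 / d) * (d * s2 x))" by (rule leJ_scale) (use d in simp)
    then have le2: "leJ pls (\<lambda>x. (1 / d) * t x) s2" using d by simp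
    have "is_measure pls (\<lambda>x. (1 / d) * t x)"
      by (rule measure_lincomb[of pls t t "1 / d" 0]) (use stateD[OF t] d in auto)
    then have "(1 / d) * t u \<le> ?m u"
      by (rule meas_meet_greatest_lower[OF pea measure_signed le1 le2])
    moreover have "(1 / d) * t u > 0" using stateD[OF t] d by simp
    ultimately have "?m u \<noteq> 0" by linarith
    then show "\<not> (\<forall>y. ?m y = 0)" by blast
  next
    assume "\<not> (\<forall>y. ?m y = 0)"
    then obtain y where "?m y \<noteq> 0" by blast
    then have mu: "?m u > 0"
      using measure_nonneg[OF m, of y] measure_le_unit[OF pea m, of y] by linarith
    define t where "t = (\<lambda>x. (1 / ?m u) * ?m x)"
    have "is_measure pls t" unfolding t_def
      by (rule measure_lincomb[OF m m, of "1 / ?m u" 0]) (use mu in auto)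
    then have ts: "t \<in> states pls u" using mu unfolding states_def is_state_def t_def by simp
    have "leJ pls t (\<lambda>x. (1 / ?m u) * s1 x)" unfolding t_def
      by (rule leJ_scale[OF meas_meet_below(1)[OF pea rdp \<mu> \<nu>]]) (use mu in simp)
    moreover have "leJ pls t (\<lambda>x. (1 / ?m u) * s2 x)" unfolding t_def
      by (rule leJ_scale[OF meas_meet_below(2)[OF pea rdp \<mu> \<nu>]]) (use mu in simp)
    moreover have "1 / ?m u > 0" using mu by simp
    ultimately have "t \<in> dominated_states pls u s1 \<inter> dominated_states pls u s2"
      using ts unfolding dominated_states_def by blast
    then show "dominated_states pls u s1 \<inter> dominated_states pls u s2 \<noteq> {}" by blast
  qed
qed

theorem proposition4p2:
  fixes pls :: "'a \<Rightarrow> 'a \<Rightarrow> 'a option" and z u :: 'a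
    and s1 s2 :: "'a \<Rightarrow> real"
  assumes "pea pls z u" and "RDP pls"
    and "s1 \<in> states pls u" and "s2 \<in> states pls u"
  shows "(face_gen (states pls u) s1 \<inter> face_gen (states pls u) s2 = {}
            \<longleftrightarrow> is_meetJ pls (\<lambda>x. 0) s1 s2)
       \<and> (is_meetJ pls (\<lambda>x. 0) s1 s2 \<longleftrightarrow> is_joinJ pls (\<lambda>x. s1 x + s2 x) s1 s2)
       \<and> (is_joinJ pls (\<lambda>x. s1 x + s2 x) s1 s2 \<longleftrightarrow>
            (\<forall>x. \<forall>\<epsilon>>0. \<exists>x1 x2. pls x1 x2 = Some x \<and> s1 x - s1 x1 < \<epsilon> \<and> s2 x - s2 x2 < \<epsilon>))
       \<and> (extreme_pt (states pls u) s1 \<and> extreme_pt (states pls u) s2 \<and> s1 \<noteq> s2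
            \<longrightarrow> is_meetJ pls (\<lambda>x. 0) s1 s2)"
proof -
  have \<mu>: "is_measure pls s1" and \<nu>: "is_measure pls s2"
    using stateD[OF assms(3)] stateD[OF assms(4)] by auto
  let ?Z = "\<forall>y. meas_meet pls s1 s2 y = 0"
  have faces: "face_gen (states pls u) s1 \<inter> face_gen (states pls u) s2 = {} \<longleftrightarrow> ?Z"
    unfolding face_gen_eq_dominated[OF assms(3)] face_gen_eq_dominated[OF assms(4)]
    using common_dominated_iff[OF assms] by blast
  have meet: "is_meetJ pls (\<lambda>x. 0) s1 s2 \<longleftrightarrow> ?Z"
    by (rule meetJ_zero_iff[OF assms(1,2) \<mu> \<nu>])
  have join: "is_joinJ pls (\<lambda>x. s1 x + s2 x) s1 s2 \<longleftrightarrow> ?Z"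
    by (rule joinJ_sum_iff[OF assms(1,2) \<mu> \<nu>])
  have split: "(\<forall>x. \<forall>\<epsilon>>0. \<exists>x1 x2. pls x1 x2 = Some x \<and> s1 x - s1 x1 < \<epsilon> \<and> s2 x - s2 x2 < \<epsilon>) \<longleftrightarrow> ?Z"
    using approx_splitting_iff[OF assms(1) \<mu> \<nu>] meas_meet_commute[OF assms(1,2) \<mu> \<nu>] by simp
  have extreme: ?Z if "extreme_pt (states pls u) s1" "extreme_pt (states pls u) s2" "s1 \<noteq> s2"
    using common_dominated_iff[OF assms] extreme_dominated[OF that(1)] extreme_dominated[OF that(2)]
      that(3) by blast
  show ?thesis using faces meet join split extreme by blast
qed

end
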